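(* Let $S$ be a finite semigroup in which every element has a square root (i.e. for every $x\in S$ there is $y\in S$ with $y^2=x$). Then every $x\in S$ has a square root in $\langle x\rangle=\{x,x^2,x^3,\dots\}$. *)

theory Defs
  imports Main
begin

text \<open>Positive powers in a semigroup (no unit needed):
  spow x n = x^(n+1).\<close>
primrec spow :: "'a::semigroup_mult \<Rightarrow> nat \<Rightarrow> 'a" where
  "spow x 0 = x"
| "spow x (Suc n) = spow x n * x"

definition cyclic_subsemigroup :: "'a::semigroup_mult \<Rightarrow> 'a set" where
  "cyclic_subsemigroup x = range (spow x)"

end

theory Submission
  imports Defs
begin

text \<open>On a finite semigroup, surjectivity of squaring means injectivity. An injective map
  sending the finite set \<open>\<langle>x\<rangle>\<close> into itself is onto it, and \<open>\<langle>x\<rangle>\<close> is closed under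
  squaring; so \<open>x \<in> \<langle>x\<rangle>\<close> is the square of an element of \<open>\<langle>x\<rangle>\<close>.\<close>

lemma spow_mult: "spow x m * spow x n = spow (x::'a::semigroup_mult) (m + n + 1)"
  by (induction n) (simp_all add: mult.assoc[symmetric])

lemma self_in_cyclic_subsemigroup: "x \<in> cyclic_subsemigroup x"
  unfolding cyclic_subsemigroup_def by (metis rangeI spow.simps(1))

lemma square_in_cyclic_subsemigroup:
  assumes "y \<in> cyclic_subsemigroup x"
  shows "y * y \<in> cyclic_subsemigroup x"
proof -
  obtain n where "y = spow x n"
    using assms unfolding cyclic_subsemigroup_def by blast
  then have "y * y = spow x (n + n + 1)"
    by (simp only: spow_mult)
  then show ?thesis
    unfolding cyclic_subsemigroup_def by blast
qed

lemma inj_square_if_surj_square: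
  assumes "\<forall>x::'a::{semigroup_mult, finite}. \<exists>y. y * y = x"
  shows "inj (\<lambda>y::'a. y * y)"
proof (rule finite_UNIV_surj_inj[OF finite_UNIV])
  show "surj (\<lambda>y::'a. y * y)"
    using assms unfolding surj_def by metis
qed

theorem theorem4p8:
  assumes "\<forall>x::'a::{semigroup_mult, finite}. \<exists>y::'a. y * y = x"
  shows "\<forall>x::'a. \<exists>y\<in>cyclic_subsemigroup x. y * y = x"
proof
  fix x :: 'a
  let ?C = "cyclic_subsemigroup x"
  have "(\<lambda>y. y * y) ` ?C \<subseteq> ?C"
    using square_in_cyclic_subsemigroup by blast
  moreover have "inj_on (\<lambda>y. y * y) ?C"
    using inj_square_if_surj_square[OF assms] by (rule inj_on_subset) simp
  ultimately have "(\<lambda>y. y * y) ` ?C = ?C"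
    by (intro endo_inj_surj) simp_all
  then show "\<exists>y\<in>?C. y * y = x"
    using self_in_cyclic_subsemigroup[of x] by force
qed

end
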